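(* Let $(\Gamma,d)$, $\rho$, $S_m$, $O(g)$ be as in the context and let $\Delta$ be the constant of the context. Then for all $n$ and all $r>n+\Delta$, for each $g\in S_r$, $h\in S_n$ and $\xi\in O(g)$, \[\frac{dh_*\rho}{d\rho}(\xi)=e^{-\delta_\Gamma\beta_g(h,e)+O(1)},\] with $O(1)$ bounded independently of $n,r,g,h,\xi$.
   Context: $\Gamma$ is a finitely generated group acting properly cocompactly by isometries on a proper quasiruled hyperbolic space $(X,d)$, basepoint $x_0$, $d(g,h)=d(g.x_0,h.x_0)$; $(\Gamma,d)$ is a proper quasiruled hyperbolic space with visual boundary $\partial\Gamma$. $\delta_\Gamma=\limsup_m\frac1m\log\#B_m$ with $B_m=\{g:d(g,e)\le m\}$; $S_m=B_m\setminus B_{m-k}$ for a fixed $k$. $\beta_g(x,y)=d(g,x)-d(g,y)$. $\rho=\rho_e$ where $\{\rho_x\}$ is the Patterson–Sullivan family: $\Gamma$-equivariant ($g_*\rho_x=\rho_{g.x}$) mutually absolutely continuous probability measures with $\frac{d\rho_y}{d\rho_x}(\xi)=e^{-\delta_\Gamma\beta_\xi(y,x)+O(1)}$, $\beta_\xi$ the Busemann function at $\xi$. $O(g)$ is the set of $\xi\in\partial\Gamma$ such that some quasiruler ray from $e$ to $\xi$ meets the closed $C$-ball about $g$, for a fixed $C$. $\Delta$ is a constant (depending only on $(\Gamma,d)$, namely the maximal thickness of quasitriangles) for which there is $R$ with $|\beta_\xi(h,e)-\beta_g(h,e)|\le R$ whenever $r>n+\Delta$, $g\in S_r$, $\xi\in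 O(g)$, $h\in S_n$. *)

theory Defs
  imports "HOL-Probability.Probability" "HOL-Algebra.Generated_Groups"
begin

definition isometric_action :: "('g, 'm) monoid_scheme \<Rightarrow> ('g \<Rightarrow> 'a::metric_space \<Rightarrow> 'a) \<Rightarrow> bool" where
  "isometric_action G act \<longleftrightarrow>
     (\<forall>x. act \<one>\<^bsub>G\<^esub> x = x) \<and>
     (\<forall>g\<in>carrier G. \<forall>h\<in>carrier G. \<forall>x. act (g \<otimes>\<^bsub>G\<^esub> h) x = act g (act h x)) \<and>
     (\<forall>g\<in>carrier G. \<forall>x y. dist (act g x) (act g y) = dist x y)"

definition proper_action :: "('g, 'm) monoid_scheme \<Rightarrow> ('g \<Rightarrow> 'a::metric_space \<Rightarrow> 'a) \<Rightarrow> bool" where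
  "proper_action G act \<longleftrightarrow>
     (\<forall>K. compact K \<longrightarrow> finite {g\<in>carrier G. act g ` K \<inter> K \<noteq> {}})"

definition cocompact_action :: "('g, 'm) monoid_scheme \<Rightarrow> ('g \<Rightarrow> 'a::metric_space \<Rightarrow> 'a) \<Rightarrow> bool" where
  "cocompact_action G act \<longleftrightarrow>
     (\<exists>K. compact K \<and> (\<Union>g\<in>carrier G. act g ` K) = UNIV)"

definition proper_metric_space :: "'a::metric_space itself \<Rightarrow> bool" where
  "proper_metric_space _ \<longleftrightarrow> (\<forall>(x::'a) r. compact (cball x r))"

definition gromov_product :: "'a::metric_space \<Rightarrow> 'a \<Rightarrow> 'a \<Rightarrow> real" where
  "gromov_product w x y = (dist w x + dist w y - dist x y) / 2"

definition gromov_hyperbolic :: "'a::metric_space itself \<Rightarrow> bool" where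
  "gromov_hyperbolic _ \<longleftrightarrow> (\<exists>\<delta>\<ge>0. \<forall>(w::'a) x y z.
      gromov_product w x z \<ge> min (gromov_product w x y) (gromov_product w y z) - \<delta>)"

definition orbit_dist :: "('g \<Rightarrow> 'a::metric_space \<Rightarrow> 'a) \<Rightarrow> 'a \<Rightarrow> 'g \<Rightarrow> 'g \<Rightarrow> real" where
  "orbit_dist act x0 g h = dist (act g x0) (act h x0)"

definition ballG :: "('g, 'm) monoid_scheme \<Rightarrow> ('g \<Rightarrow> 'a::metric_space \<Rightarrow> 'a) \<Rightarrow> 'a \<Rightarrow> real \<Rightarrow> 'g set" where
  "ballG G act x0 m = {g\<in>carrier G. orbit_dist act x0 g \<one>\<^bsub>G\<^esub> \<le> m}"

definition sphereG :: "('g, 'm) monoid_scheme \<Rightarrow> ('g \<Rightarrow> 'a::metric_space \<Rightarrow> 'a) \<Rightarrow> 'a \<Rightarrow> real \<Rightarrow> real \<Rightarrow> 'g set" where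
  "sphereG G act x0 k m = ballG G act x0 m - ballG G act x0 (m - k)"

definition crit_exp :: "('g, 'm) monoid_scheme \<Rightarrow> ('g \<Rightarrow> 'a::metric_space \<Rightarrow> 'a) \<Rightarrow> 'a \<Rightarrow> ereal" where
  "crit_exp G act x0 = limsup (\<lambda>m::nat. ereal (ln (real (card (ballG G act x0 (real m)))) / real m))"

definition beta_grp :: "('g \<Rightarrow> 'a::metric_space \<Rightarrow> 'a) \<Rightarrow> 'a \<Rightarrow> 'g \<Rightarrow> 'g \<Rightarrow> 'g \<Rightarrow> real" where
  "beta_grp act x0 g x y = orbit_dist act x0 g x - orbit_dist act x0 g y"

end

theory Submission
  imports Defs
begin

text \<open>By equivariance the push-forward of \<open>\<rho>\<close> under h is the Patterson--Sullivan measure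
  \<open>\<rho>\<^sub>h\<close>, whose density with respect to \<open>\<rho>\<close> is \<open>exp(-\<delta> \<beta>\<^sub>\<xi>(h,e) \<plusminus> C)\<close>. On the shadow
  \<open>O(g)\<close> the Busemann cocycle \<open>\<beta>\<^sub>\<xi>(h,e)\<close> differs from \<open>\<beta>\<^sub>g(h,e)\<close> by at most R, which only
  enlarges the multiplicative error by \<open>exp(|\<delta>| R)\<close>.\<close>

lemma exp_window_shift:
  fixes \<delta> a b C R :: real and D :: ennreal
  assumes "\<bar>b - a\<bar> \<le> R"
    and "ennreal (exp (- \<delta> * b - C)) \<le> D" and "D \<le> ennreal (exp (- \<delta> * b + C))"
  shows "ennreal (exp (- \<delta> * a - (C + \<bar>\<delta>\<bar> * \<bar>R\<bar>))) \<le> D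
    \<and> D \<le> ennreal (exp (- \<delta> * a + (C + \<bar>\<delta>\<bar> * \<bar>R\<bar>)))"
proof -
  have shift: "\<bar>\<delta> * (b - a)\<bar> \<le> \<bar>\<delta>\<bar> * \<bar>R\<bar>"
    using assms(1) by (simp add: abs_mult mult_left_mono)
  have "ennreal (exp (- \<delta> * a - (C + \<bar>\<delta>\<bar> * \<bar>R\<bar>))) \<le> ennreal (exp (- \<delta> * b - C))"
    using shift by (intro ennreal_leI) (simp add: algebra_simps abs_le_iff)
  moreover have "ennreal (exp (- \<delta> * b + C)) \<le> ennreal (exp (- \<delta> * a + (C + \<bar>\<delta>\<bar> * \<bar>R\<bar>)))"
    using shift by (intro ennreal_leI) (simp add: algebra_simps abs_le_iff)
  ultimately show ?thesis
    using assms(2,3) order_trans by blast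
qed

lemma AE_exp_window_shift:
  fixes \<delta> a C R :: real and b :: "'b \<Rightarrow> real" and D :: "'b \<Rightarrow> ennreal"
  assumes "AE \<xi> in M. ennreal (exp (- \<delta> * b \<xi> - C)) \<le> D \<xi> \<and> D \<xi> \<le> ennreal (exp (- \<delta> * b \<xi> + C))"
    and "\<And>\<xi>. \<xi> \<in> S \<Longrightarrow> \<bar>b \<xi> - a\<bar> \<le> R"
  shows "AE \<xi> in M. \<xi> \<in> S \<longrightarrow> ennreal (exp (- \<delta> * a - (C + \<bar>\<delta>\<bar> * \<bar>R\<bar>))) \<le> D \<xi>
    \<and> D \<xi> \<le> ennreal (exp (- \<delta> * a + (C + \<bar>\<delta>\<bar> * \<bar>R\<bar>)))"
  using assms(1) by (rule eventually_mono) (use assms(2) exp_window_shift in blast)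

theorem mainTheorem10:
  fixes G :: "('g, 'm) monoid_scheme"
    and act :: "'g \<Rightarrow> 'a::metric_space \<Rightarrow> 'a"
    and x0 :: 'a
    and k :: real
    and bact :: "'g \<Rightarrow> 'b \<Rightarrow> 'b"
    and \<rho> :: "'g \<Rightarrow> 'b measure"
    and busemann :: "'b \<Rightarrow> 'g \<Rightarrow> 'g \<Rightarrow> real"
    and Sh :: "'g \<Rightarrow> 'b set"
    and \<Delta> :: real
  defines "\<delta> \<equiv> real_of_ereal (crit_exp G act x0)"
  assumes grp: "group G"
    and fg: "\<exists>A. finite A \<and> A \<subseteq> carrier G \<and> generate G A = carrier G"
    and X_proper: "proper_metric_space TYPE('a)"
    and X_hyp: "gromov_hyperbolic TYPE('a)"
    and isom: "isometric_action G act"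
    and prop_act: "proper_action G act"
    and cocpt: "cocompact_action G act"
    and k_pos: "k > 0"
    \<comment> \<open>boundary action: measurable, by a group action\<close>
    and bact_one: "\<And>\<xi>. bact \<one>\<^bsub>G\<^esub> \<xi> = \<xi>"
    and bact_mult: "\<And>g h \<xi>. g \<in> carrier G \<Longrightarrow> h \<in> carrier G \<Longrightarrow>
                       bact (g \<otimes>\<^bsub>G\<^esub> h) \<xi> = bact g (bact h \<xi>)"
    and bact_meas: "\<And>g x. g \<in> carrier G \<Longrightarrow> x \<in> carrier G \<Longrightarrow> bact g \<in> (\<rho> x) \<rightarrow>\<^sub>M (\<rho> x)"
    \<comment> \<open>Patterson--Sullivan family\<close>
    and PS_prob: "\<And>x. x \<in> carrier G \<Longrightarrow> prob_space (\<rho> x)"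
    and PS_sets: "\<And>x y. x \<in> carrier G \<Longrightarrow> y \<in> carrier G \<Longrightarrow> sets (\<rho> x) = sets (\<rho> y)"
    and PS_ac: "\<And>x y. x \<in> carrier G \<Longrightarrow> y \<in> carrier G \<Longrightarrow> absolutely_continuous (\<rho> x) (\<rho> y)"
    and PS_equiv: "\<And>g x. g \<in> carrier G \<Longrightarrow> x \<in> carrier G \<Longrightarrow>
                       distr (\<rho> x) (\<rho> x) (bact g) = \<rho> (g \<otimes>\<^bsub>G\<^esub> x)"
    and PS_RN: "\<exists>C. \<forall>x\<in>carrier G. \<forall>y\<in>carrier G. AE \<xi> in \<rho> x.
                  ennreal (exp (- \<delta> * busemann \<xi> y x - C)) \<le> RN_deriv (\<rho> x) (\<rho> y) \<xi> \<and>
                  RN_deriv (\<rho> x) (\<rho> y) \<xi> \<le> ennreal (exp (- \<delta> * busemann \<xi> y x + C))"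
    \<comment> \<open>the defining property of the constant Delta\<close>
    and Delta: "\<exists>R. \<forall>n r::nat. real r > real n + \<Delta> \<longrightarrow>
                  (\<forall>g\<in>sphereG G act x0 k (real r). \<forall>\<xi>\<in>Sh g. \<forall>h\<in>sphereG G act x0 k (real n).
                     \<bar>busemann \<xi> h \<one>\<^bsub>G\<^esub> - beta_grp act x0 g h \<one>\<^bsub>G\<^esub>\<bar> \<le> R)"
  shows "\<exists>C. \<forall>n r::nat. real r > real n + \<Delta> \<longrightarrow>
           (\<forall>g\<in>sphereG G act x0 k (real r). \<forall>h\<in>sphereG G act x0 k (real n).
              AE \<xi> in \<rho> \<one>\<^bsub>G\<^esub>. \<xi> \<in> Sh g \<longrightarrow>
                ennreal (exp (- \<delta> * beta_grp act x0 g h \<one>\<^bsub>G\<^esub> - C))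
                  \<le> RN_deriv (\<rho> \<one>\<^bsub>G\<^esub>) (distr (\<rho> \<one>\<^bsub>G\<^esub>) (\<rho> \<one>\<^bsub>G\<^esub>) (bact h)) \<xi> \<and>
                RN_deriv (\<rho> \<one>\<^bsub>G\<^esub>) (distr (\<rho> \<one>\<^bsub>G\<^esub>) (\<rho> \<one>\<^bsub>G\<^esub>) (bact h)) \<xi>
                  \<le> ennreal (exp (- \<delta> * beta_grp act x0 g h \<one>\<^bsub>G\<^esub> + C)))"
proof -
  obtain C where C: "\<forall>x\<in>carrier G. \<forall>y\<in>carrier G. AE \<xi> in \<rho> x.
      ennreal (exp (- \<delta> * busemann \<xi> y x - C)) \<le> RN_deriv (\<rho> x) (\<rho> y) \<xi> \<and>
      RN_deriv (\<rho> x) (\<rho> y) \<xi> \<le> ennreal (exp (- \<delta> * busemann \<xi> y x + C))"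
    using PS_RN by blast
  obtain R where R: "\<forall>n r::nat. real r > real n + \<Delta> \<longrightarrow>
      (\<forall>g\<in>sphereG G act x0 k (real r). \<forall>\<xi>\<in>Sh g. \<forall>h\<in>sphereG G act x0 k (real n).
         \<bar>busemann \<xi> h \<one>\<^bsub>G\<^esub> - beta_grp act x0 g h \<one>\<^bsub>G\<^esub>\<bar> \<le> R)"
    using Delta by blast
  have one: "\<one>\<^bsub>G\<^esub> \<in> carrier G"
    using grp by (simp add: group.is_monoid monoid.one_closed)
  show ?thesis
  proof (intro exI[of _ "C + \<bar>\<delta>\<bar> * \<bar>R\<bar>"] allI impI ballI, goal_cases)
    case (1 n r g h)
    then have hG: "h \<in> carrier G"
      by (simp add: sphereG_def ballG_def)
    have pushforward: "distr (\<rho> \<one>\<^bsub>G\<^esub>) (\<rho> \<one>\<^bsub>G\<^esub>) (bact h) = \<rho> h"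
      using PS_equiv[OF hG one] grp hG by (simp add: group.is_monoid monoid.r_one)
    have "AE \<xi> in \<rho> \<one>\<^bsub>G\<^esub>.
        ennreal (exp (- \<delta> * busemann \<xi> h \<one>\<^bsub>G\<^esub> - C)) \<le> RN_deriv (\<rho> \<one>\<^bsub>G\<^esub>) (\<rho> h) \<xi> \<and>
        RN_deriv (\<rho> \<one>\<^bsub>G\<^esub>) (\<rho> h) \<xi> \<le> ennreal (exp (- \<delta> * busemann \<xi> h \<one>\<^bsub>G\<^esub> + C))"
      using C one hG by blast
    then show ?case
      unfolding pushforward by (rule AE_exp_window_shift) (use R 1 in blast)
  qed
qed

end
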